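(* Let $n\ge2$ and let $\mathbf W$ be uniformly distributed on $\mathcal W^n$. Then for each $1\le j\le n-1$, \[ \mathbb E\left[\frac{B_j(\mathbf W)}{n}\right]=\frac{j}{\binom n2}, \] where $B_j(\mathbf w)$ is the number of leaves among the two children of the rank-$j$ internal node of $\mathbf w$.
   Context: $\mathcal W^n$ is the set of ranked leaf-labelled rooted binary tree topologies with leaves $\{1,\dots,n\}$: binary trees with $n-1$ internal nodes totally ordered by rank $1,\dots,n-1$ (rank 1 is the root; each internal node has larger rank than its parent). Its cardinality is $n!(n-1)!/2^{n-1}$. *)

theory Defs
  imports "HOL-Probability.Probability" "HOL-Library.Multiset"
begin

text \<open>Rooted trees whose leaves carry a label and whose internal nodes carry a rank.
  Children are kept in a multiset, so trees are unordered (topologies).\<close>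
datatype rtree = Leaf nat | Node nat "rtree multiset"

primrec is_leaf :: "rtree \<Rightarrow> bool" where
  "is_leaf (Leaf i) = True"
| "is_leaf (Node r ts) = False"

primrec leaves :: "rtree \<Rightarrow> nat multiset" where
  "leaves (Leaf i) = {#i#}"
| "leaves (Node r ts) = \<Sum>\<^sub># (image_mset leaves ts)"

primrec ranks :: "rtree \<Rightarrow> nat multiset" where
  "ranks (Leaf i) = {#}"
| "ranks (Node r ts) = add_mset r (\<Sum>\<^sub># (image_mset ranks ts))"

primrec child_ok :: "nat \<Rightarrow> rtree \<Rightarrow> bool" where
  "child_ok r (Leaf i) = True"
| "child_ok r (Node s ts) = (r < s)"

primrec wf_rtree :: "rtree \<Rightarrow> bool" where
  "wf_rtree (Leaf i) = True"
| "wf_rtree (Node r ts) = (size ts = 2 \<and> (\<forall>t\<in>#ts. child_ok r t) \<and> Ball (set_mset (image_mset wf_rtree ts)) id)"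

definition ranked_trees :: "nat \<Rightarrow> rtree set" where
  "ranked_trees n = {t. wf_rtree t \<and> leaves t = mset [1..<n+1] \<and> ranks t = mset [1..<n]}"

primrec B :: "nat \<Rightarrow> rtree \<Rightarrow> nat" where
  "B j (Leaf i) = 0"
| "B j (Node r ts) = (if r = j then size (filter_mset is_leaf ts) else 0) + \<Sum>\<^sub># (image_mset (B j) ts)"

end

theory Submission
  imports Defs
begin

text \<open>
  Grafting a new leaf b as the sibling of an existing leaf a, under a new internal node of
  the largest rank, maps the triples (b, a, t), t a ranked tree on the remaining labels, onto
  the ranked trees on all labels, and every tree has exactly two preimages: its top cherry
  {a, b} read in either order. The top node always has two leaf children. For a lower rank j,
  grafting at a lowers B_j by one exactly when a is a leaf child of the rank-j node, so summing
  over the m + 1 choices of a multiplies B_j by m. Double counting therefore carries the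
  identity m \<cdot> \<Sum> B_j = 2 j \<cdot> |W| from m + 1 to m + 2 leaves, i.e. E[B_j] = 2j/(n - 1).
\<close>

primrec graft :: "nat \<Rightarrow> nat \<Rightarrow> nat \<Rightarrow> rtree \<Rightarrow> rtree" where
  "graft a b r (Leaf x) = (if x = a then Node r {#Leaf a, Leaf b#} else Leaf x)"
| "graft a b r (Node s ts) = Node s (image_mset (graft a b r) ts)"

primrec prune :: "nat \<Rightarrow> nat \<Rightarrow> rtree \<Rightarrow> rtree" where
  "prune a r (Leaf x) = Leaf x"
| "prune a r (Node s ts) = (if s = r then Leaf a else Node s (image_mset (prune a r) ts))"

primrec children_at :: "nat \<Rightarrow> rtree \<Rightarrow> rtree multiset" where
  "children_at r (Leaf x) = {#}"
| "children_at r (Node s ts) = (if s = r then ts else {#}) + (\<Sum>t\<in>#ts. children_at r t)"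

lemma count_sum_mset: "count (\<Sum>x\<in>#M. f x) y = (\<Sum>x\<in>#M. count (f x) y)"
  by (induction M) auto

lemma sum_mset_replicate_mset: "(\<Sum>x\<in>#M. replicate_mset (f x) b) = replicate_mset (\<Sum>x\<in>#M. f x) b"
  by (induction M) (auto simp: multiset_eq_iff)

lemma image_mset_sum_mset: "image_mset f (\<Sum>x\<in>#M. g x) = (\<Sum>x\<in>#M. image_mset f (g x))"
  by (induction M) auto

lemma filter_mset_sum_mset: "filter_mset P (\<Sum>x\<in>#M. g x) = (\<Sum>x\<in>#M. filter_mset P (g x))"
  by (induction M) auto

lemma children_at_eq_empty: "r \<notin># ranks t \<Longrightarrow> children_at r t = {#}"
  by (induction t) auto

lemma prune_eq_self: "r \<notin># ranks t \<Longrightarrow> prune a r t = t"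
  by (induction t) (auto intro: multiset.map_ident_strong)

lemma graft_eq_self: "a \<notin># leaves t \<Longrightarrow> graft a b r t = t"
  by (induction t) (auto intro: multiset.map_ident_strong)

lemma leaves_graft: "leaves (graft a b r t) = leaves t + replicate_mset (count (leaves t) a) b"
  by (induction t) (auto simp: image_mset.compositionality o_def sum_mset.distrib
      sum_mset_replicate_mset count_sum_mset cong: multiset.map_cong_simp)

lemma ranks_graft: "ranks (graft a b r t) = ranks t + replicate_mset (count (leaves t) a) r"
  by (induction t) (auto simp: image_mset.compositionality o_def sum_mset.distrib
      sum_mset_replicate_mset count_sum_mset cong: multiset.map_cong_simp)

lemma wf_rtree_graft: "wf_rtree t \<Longrightarrow> \<forall>s\<in>#ranks t. s < r \<Longrightarrow> wf_rtree (graft a b r t)"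
proof (induction t)
  case (Node s ts)
  have "child_ok s (graft a b r t)" if "t \<in># ts" for t
    using Node.prems that by (cases t) auto
  then show ?case using Node by auto
qed auto

lemma prune_graft: "r \<notin># ranks t \<Longrightarrow> prune a r (graft a b r t) = t"
  by (induction t) (auto simp: image_mset.compositionality o_def intro: multiset.map_ident_strong)

lemma children_at_graft_same:
  "r \<notin># ranks t \<Longrightarrow>
    children_at r (graft a b r t) = repeat_mset (count (leaves t) a) {#Leaf a, Leaf b#}"
  by (induction t) (auto simp: image_mset.compositionality o_def sum_mset.distrib
      sum_mset_replicate_mset count_sum_mset cong: multiset.map_cong_simp)

lemma children_at_graft_other:
  "j \<noteq> r \<Longrightarrow> children_at j (graft a b r t) = image_mset (graft a b r) (children_at j t)"
  by (induction t) (auto simp: image_mset.compositionality o_def image_mset_sum_mset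
      cong: multiset.map_cong_simp)

lemma wf_rtree_prune: "wf_rtree t \<Longrightarrow> wf_rtree (prune a r t)"
proof (induction t)
  case (Node s ts)
  have "child_ok s (prune a r t)" if "t \<in># ts" for t
    using Node.prems that by (cases t) auto
  then show ?case using Node by auto
qed auto

lemma mem_leaves_prune: "r \<in># ranks t \<Longrightarrow> a \<in># leaves (prune a r t)"
  by (induction t) (auto simp: image_mset.compositionality)

lemma leaves_children_at: "Leaf x \<in># children_at r t \<Longrightarrow> x \<in># leaves t"
  by (induction t) (force split: if_splits)+

lemma size_children_at: "wf_rtree t \<Longrightarrow> size (children_at r t) = 2 * count (ranks t) r"
  by (induction t) (auto simp: count_sum_mset sum_mset_distrib_left image_mset.compositionality o_def
      cong: multiset.map_cong_simp)

lemma is_leaf_children_at_max_rank: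
  "wf_rtree t \<Longrightarrow> \<forall>s\<in>#ranks t. s \<le> r \<Longrightarrow> c \<in># children_at r t \<Longrightarrow> is_leaf c"
proof (induction t)
  case (Node s ts)
  show ?case
  proof (cases "c \<in># \<Sum>\<^sub># (image_mset (children_at r) ts)")
    case True
    then obtain t where "t \<in># ts" "c \<in># children_at r t" by auto
    then show ?thesis using Node by (auto dest!: multi_member_split)
  next
    case False
    then have "s = r" "c \<in># ts" using Node.prems(3) by (auto split: if_splits)
    then show ?thesis using Node.prems(1,2) by (cases c) (auto dest!: multi_member_split)
  qed
qed simp

lemma B_eq_size_leaf_children_at: "B j t = size (filter_mset is_leaf (children_at j t))"
  by (induction t) (auto simp: filter_mset_sum_mset image_mset.compositionality o_def
      cong: multiset.map_cong_simp)

lemma graft_prune: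
  assumes "count (ranks t) r \<le> 1" "count (leaves t) a \<le> 1"
    and "children_at r t = {#Leaf a, Leaf b#}"
  shows "graft a b r (prune a r t) = t"
  using assms
proof (induction t)
  case (Node s ts)
  show ?case
  proof (cases "s = r")
    case True
    then have "r \<notin># ranks c" if "c \<in># ts" for c
      using Node.prems(1) that by (auto dest!: multi_member_split)
    then have "ts = {#Leaf a, Leaf b#}"
      using Node.prems(3) True by (simp add: children_at_eq_empty cong: multiset.map_cong_simp)
    then show ?thesis using True by simp
  next
    case False
    then have "r \<in># \<Sum>\<^sub># (image_mset ranks ts)"
      using Node.prems(3) children_at_eq_empty[of r "Node s ts"] by auto
    then obtain c ts' where ts: "ts = add_mset c ts'" and "r \<in># ranks c"
      by (auto dest!: multi_member_split)
    then have ranks_ts': "r \<notin># ranks c'" if "c' \<in># ts'" for c'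
      using Node.prems(1) False that by (auto dest!: multi_member_split)
    then have children_c: "children_at r c = {#Leaf a, Leaf b#}"
      using Node.prems(3) False ts by (simp add: children_at_eq_empty cong: multiset.map_cong_simp)
    then have "a \<in># leaves c"
      using leaves_children_at[of a r c] by simp
    then have leaves_ts': "a \<notin># leaves c'" if "c' \<in># ts'" for c'
      using Node.prems(2) that ts by (auto dest!: multi_member_split)
    have "graft a b r (prune a r c) = c"
      using Node.IH[of c] Node.prems(1,2) False children_c ts by simp
    moreover have "image_mset (graft a b r \<circ> prune a r) ts' = ts'"
      using ranks_ts' leaves_ts' prune_eq_self graft_eq_self
      by (simp add: multiset.map_ident_strong)
    ultimately show ?thesis
      using False ts by (simp add: image_mset.compositionality)
  qed
qed simp

lemma children_at_max_rank:
  assumes "wf_rtree t" "\<forall>s\<in>#ranks t. s \<le> r" "count (ranks t) r = 1"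
  obtains a b where "children_at r t = {#Leaf a, Leaf b#}"
proof -
  have "size (children_at r t) = Suc 1"
    using size_children_at assms(1,3) by simp
  then obtain c d where cd: "children_at r t = {#c, d#}"
    by (metis size_mset_SucE size_1_singleton_mset add_mset_add_single)
  then have "is_leaf c" "is_leaf d"
    using is_leaf_children_at_max_rank[OF assms(1,2)] by auto
  then show thesis
    using cd that by (cases c; cases d) auto
qed

lemma size_filter_is_leaf_image_graft:
  "size (filter_mset is_leaf (image_mset (graft a b r) M)) + count M (Leaf a)
     = size (filter_mset is_leaf M)"
proof (induction M)
  case (add t M)
  then show ?case by (cases t) auto
qed simp

lemma sum_count_Leaf:
  "finite A \<Longrightarrow> (\<And>x. Leaf x \<in># M \<Longrightarrow> x \<in> A) \<Longrightarrow>
    (\<Sum>a\<in>A. count M (Leaf a)) = size (filter_mset is_leaf M)"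
proof (induction M)
  case (add t M)
  show ?case
  proof (cases t)
    case (Leaf x)
    then have "(\<Sum>a\<in>A. count (add_mset t M) (Leaf a))
        = (\<Sum>a\<in>A. count M (Leaf a) + (if a = x then 1 else 0))"
      by (intro sum.cong) auto
    then show ?thesis
      using add Leaf by (simp add: sum.distrib)
  next
    case (Node s ts)
    then show ?thesis using add by simp
  qed
qed simp

text \<open>Grafting onto the leaf a removes a from the leaf children of the rank-j nodes, so the
  sum over all a loses exactly B j t.\<close>

lemma sum_B_graft:
  assumes "finite A" "set_mset (leaves t) \<subseteq> A" "j \<noteq> r"
  shows "(\<Sum>a\<in>A. B j (graft a b r t)) + B j t = card A * B j t"
proof -
  have "B j (graft a b r t) + count (children_at j t) (Leaf a) = B j t" for a
    using size_filter_is_leaf_image_graft assms(3)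
    by (simp add: B_eq_size_leaf_children_at children_at_graft_other)
  then have "(\<Sum>a\<in>A. B j (graft a b r t)) + (\<Sum>a\<in>A. count (children_at j t) (Leaf a))
      = (\<Sum>a\<in>A. B j t)"
    by (simp flip: sum.distrib)
  moreover have "(\<Sum>a\<in>A. count (children_at j t) (Leaf a)) = B j t"
    using assms(1,2) leaves_children_at
    by (subst sum_count_Leaf) (auto simp: B_eq_size_leaf_children_at)
  ultimately show ?thesis by simp
qed

text \<open>Labels range over an arbitrary set, so that deleting a leaf stays within the family.\<close>

definition ranked_trees_on :: "nat set \<Rightarrow> rtree set" where
  "ranked_trees_on L = {t. wf_rtree t \<and> leaves t = mset_set L \<and> ranks t = mset_set {1..<card L}}"

lemma ranked_trees_eq_ranked_trees_on: "ranked_trees n = ranked_trees_on {1..n}"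
  unfolding ranked_trees_def ranked_trees_on_def mset_upt
  by (simp add: atLeastLessThanSuc_atLeastAtMost del: upt_Suc)

lemma ranked_trees_on_singleton: "ranked_trees_on {x} = {Leaf x}"
proof -
  have "t = Leaf x" if "ranks t = {#}" "leaves t = {#x#}" for t
    using that by (cases t) auto
  then show ?thesis by (auto simp: ranked_trees_on_def)
qed

lemma mset_set_atLeastLessThan_Suc:
  "m \<le> n \<Longrightarrow> mset_set {m..<Suc n} = add_mset n (mset_set {m..<n})"
  by (simp add: atLeastLessThanSuc)

lemma graft_mem_ranked_trees_on:
  assumes "card L = Suc n" "b \<in> L" "a \<in> L - {b}" "t \<in> ranked_trees_on (L - {b})"
  shows "graft a b n t \<in> ranked_trees_on L"
proof -
  have L: "finite L" "card (L - {b}) = n"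
    using assms(1,2) card.infinite by fastforce+
  then have "1 \<le> n"
    using assms(3) by (cases n) auto
  have t: "wf_rtree t" "leaves t = mset_set (L - {b})" "ranks t = mset_set {1..<n}"
    using assms(4) L by (auto simp: ranked_trees_on_def)
  then have "count (leaves t) a = 1"
    using assms(3) L by simp
  then show ?thesis
    using t L \<open>1 \<le> n\<close> assms(1,2) mset_set.remove[of L b]
    by (auto simp: ranked_trees_on_def leaves_graft ranks_graft mset_set_atLeastLessThan_Suc
        intro: wf_rtree_graft)
qed

lemma top_children_at_ranked_trees_on:
  assumes "T \<in> ranked_trees_on L" "card L = Suc n" "1 \<le> n"
  obtains a b where "children_at n T = {#Leaf a, Leaf b#}"
proof -
  have "ranks T = mset_set {1..<Suc n}" "wf_rtree T"
    using assms(1,2) by (auto simp: ranked_trees_on_def)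
  then show thesis
    using children_at_max_rank[of T n] that assms(3) by auto
qed

lemma B_top_ranked_trees_on:
  assumes "T \<in> ranked_trees_on L" "card L = Suc n" "1 \<le> n"
  shows "B n T = 2"
proof -
  obtain a b where "children_at n T = {#Leaf a, Leaf b#}"
    using top_children_at_ranked_trees_on[OF assms] .
  then show ?thesis by (simp add: B_eq_size_leaf_children_at)
qed

lemma graft_prune_ranked_trees_on:
  assumes T: "T \<in> ranked_trees_on L" and L: "card L = Suc n"
    and children: "children_at n T = {#Leaf a, Leaf b#}"
  shows "graft a b n (prune a n T) = T"
    and "leaves (prune a n T) + {#b#} = leaves T" "ranks (prune a n T) + {#n#} = ranks T"
proof -
  have T': "leaves T = mset_set L" "ranks T = mset_set {1..<Suc n}"
    using T L by (auto simp: ranked_trees_on_def)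
  show graft: "graft a b n (prune a n T) = T"
    using T' children by (intro graft_prune) (auto simp: count_mset_set')
  have "n \<in># ranks T"
    using children children_at_eq_empty[of n T] by auto
  then have "a \<in># leaves (prune a n T)" "count (ranks T) n = 1"
    using T' by (simp_all add: mem_leaves_prune)
  then have "count (leaves (prune a n T)) a = 1"
    using ranks_graft[of a b n "prune a n T"] graft by (simp flip: count_greater_zero_iff)
  then show "leaves (prune a n T) + {#b#} = leaves T" "ranks (prune a n T) + {#n#} = ranks T"
    using ranks_graft[of a b n "prune a n T"] leaves_graft[of a b n "prune a n T"] graft
    by simp_all
qed

lemma prune_mem_ranked_trees_on:
  assumes T: "T \<in> ranked_trees_on L" and L: "card L = Suc n"
    and children: "children_at n T = {#Leaf a, Leaf b#}"
  shows "b \<in> L" "a \<in> L - {b}" "prune a n T \<in> ranked_trees_on (L - {b})"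
proof -
  have fin: "finite L" using L card.infinite by fastforce
  have T': "wf_rtree T" "leaves T = mset_set L" "ranks T = mset_set {1..<Suc n}"
    using T L by (auto simp: ranked_trees_on_def)
  note leaves_t = graft_prune_ranked_trees_on(2)[OF T L children]
    and ranks_t = graft_prune_ranked_trees_on(3)[OF T L children]
  have "n \<in># ranks T"
    using children children_at_eq_empty[of n T] by auto
  then have "1 \<le> n"
    using T' by simp
  have "b \<in># leaves T"
    unfolding leaves_t[symmetric] by simp
  then show "b \<in> L"
    using T' fin by simp
  moreover have "a \<in> L"
    using leaves_children_at[of a n T] children T' fin by simp
  moreover have "a \<noteq> b"
  proof
    assume "a = b"
    have "a \<in># leaves (prune a n T)"
      using \<open>n \<in># ranks T\<close> by (rule mem_leaves_prune)
    then have "count (leaves T) a \<ge> 2"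
      using \<open>a = b\<close> by (simp flip: leaves_t)
    then show False
      using T' by (simp add: count_mset_set' split: if_splits)
  qed
  ultimately show "a \<in> L - {b}" by simp
  have "leaves (prune a n T) = leaves T - {#b#}"
    by (simp flip: leaves_t)
  then have "leaves (prune a n T) = mset_set (L - {b})"
    using T' fin \<open>b \<in> L\<close> by (simp add: mset_set_Diff)
  moreover have "ranks (prune a n T) = ranks T - {#n#}"
    by (simp flip: ranks_t)
  then have "ranks (prune a n T) = mset_set {1..<card (L - {b})}"
    using T' L \<open>b \<in> L\<close> \<open>1 \<le> n\<close> fin by (simp add: mset_set_atLeastLessThan_Suc)
  ultimately show "prune a n T \<in> ranked_trees_on (L - {b})"
    using T' wf_rtree_prune unfolding ranked_trees_on_def by simp
qed

definition graft_triples :: "nat set \<Rightarrow> (nat \<times> nat \<times> rtree) set" where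
  "graft_triples L = (SIGMA b:L. (L - {b}) \<times> ranked_trees_on (L - {b}))"

text \<open>The two preimages read the top cherry {a, b} of T in either order.\<close>

lemma graft_triples_fiber_card:
  assumes T: "T \<in> ranked_trees_on L" and L: "card L = Suc n" "1 \<le> n"
  shows "card {x \<in> graft_triples L. (\<lambda>(b, a, t). graft a b n t) x = T} = 2"
proof -
  obtain a b where ab: "children_at n T = {#Leaf a, Leaf b#}"
    using top_children_at_ranked_trees_on[OF T L] .
  then have ba: "children_at n T = {#Leaf b, Leaf a#}"
    by (simp add: add_mset_commute)
  note cut_ab = prune_mem_ranked_trees_on[OF T L(1) ab] graft_prune_ranked_trees_on(1)[OF T L(1) ab]
    and cut_ba = prune_mem_ranked_trees_on[OF T L(1) ba] graft_prune_ranked_trees_on(1)[OF T L(1) ba]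
  have "{x \<in> graft_triples L. (\<lambda>(b, a, t). graft a b n t) x = T}
      = {(b, a, prune a n T), (a, b, prune b n T)}"
  proof (intro equalityI subsetI)
    fix x assume "x \<in> {x \<in> graft_triples L. (\<lambda>(b, a, t). graft a b n t) x = T}"
    then obtain b' a' t where x: "x = (b', a', t)" "b' \<in> L" "a' \<in> L - {b'}"
      "t \<in> ranked_trees_on (L - {b'})" "graft a' b' n t = T"
      by (auto simp: graft_triples_def)
    have "card (L - {b'}) = n" "finite L"
      using L x(2) card.infinite by fastforce+
    then have "n \<notin># ranks t" "count (leaves t) a' = 1"
      using x(3,4) by (auto simp: ranked_trees_on_def)
    then have "{#Leaf a', Leaf b'#} = {#Leaf a, Leaf b#}"
      using children_at_graft_same[of n t a' b'] x(5) ab by simp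
    then have "a' = a \<and> b' = b \<or> a' = b \<and> b' = a"
      by (auto simp: add_eq_conv_diff)
    moreover have "t = prune a' n T"
      using prune_graft[OF \<open>n \<notin># ranks t\<close>, of a' b'] unfolding x(5) by simp
    ultimately show "x \<in> {(b, a, prune a n T), (a, b, prune b n T)}"
      using x(1) by auto
  next
    fix x assume "x \<in> {(b, a, prune a n T), (a, b, prune b n T)}"
    then show "x \<in> {x \<in> graft_triples L. (\<lambda>(b, a, t). graft a b n t) x = T}"
      using cut_ab cut_ba by (auto simp: graft_triples_def)
  qed
  moreover have "a \<noteq> b"
    using cut_ab(2) by simp
  ultimately show ?thesis by simp
qed

lemma ranked_trees_on_eq_image_graft:
  assumes "card L = Suc n" "1 \<le> n"
  shows "ranked_trees_on L = (\<lambda>(b, a, t). graft a b n t) ` graft_triples L"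
proof (intro equalityI subsetI)
  fix T assume T: "T \<in> ranked_trees_on L"
  obtain a b where "children_at n T = {#Leaf a, Leaf b#}"
    using top_children_at_ranked_trees_on[OF T assms] .
  then have "(b, a, prune a n T) \<in> graft_triples L" "graft a b n (prune a n T) = T"
    using prune_mem_ranked_trees_on[OF T assms(1)] graft_prune_ranked_trees_on(1)[OF T assms(1)]
    by (simp_all add: graft_triples_def)
  then show "T \<in> (\<lambda>(b, a, t). graft a b n t) ` graft_triples L"
    by force
next
  fix T assume "T \<in> (\<lambda>(b, a, t). graft a b n t) ` graft_triples L"
  then obtain b a t where "b \<in> L" "a \<in> L - {b}" "t \<in> ranked_trees_on (L - {b})"
    and "T = graft a b n t"
    by (auto simp: graft_triples_def)
  then show "T \<in> ranked_trees_on L"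
    using graft_mem_ranked_trees_on[OF assms(1)] by simp
qed

lemma finite_ranked_trees_on: "card L = Suc n \<Longrightarrow> finite (ranked_trees_on L)"
proof (induction n arbitrary: L)
  case 0
  then obtain x where "L = {x}" by (auto simp: card_Suc_eq)
  then show ?case by (simp add: ranked_trees_on_singleton)
next
  case (Suc n)
  have "finite L" "\<And>b. b \<in> L \<Longrightarrow> card (L - {b}) = Suc n"
    using Suc.prems card.infinite by fastforce+
  then have "finite (graft_triples L)"
    using Suc.IH by (auto simp: graft_triples_def)
  then show ?case
    using ranked_trees_on_eq_image_graft[OF Suc.prems] by simp
qed

lemma ranked_trees_on_nonempty: "card L = Suc n \<Longrightarrow> ranked_trees_on L \<noteq> {}"
proof (induction n arbitrary: L)
  case 0
  then obtain x where "L = {x}" by (auto simp: card_Suc_eq)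
  then show ?case by (simp add: ranked_trees_on_singleton)
next
  case (Suc n)
  then obtain b where "b \<in> L"
    by fastforce
  then have "card (L - {b}) = Suc n"
    using Suc.prems by simp
  then obtain a where "a \<in> L - {b}"
    by (metis card.empty ex_in_conv nat.distinct(1))
  moreover obtain t where "t \<in> ranked_trees_on (L - {b})"
    using Suc \<open>b \<in> L\<close> by fastforce
  ultimately show ?case
    using graft_mem_ranked_trees_on[OF Suc.prems \<open>b \<in> L\<close>] by blast
qed

lemma sum_graft_ranked_trees_on:
  fixes g :: "rtree \<Rightarrow> 'a::comm_semiring_1"
  assumes "card L = Suc n" "1 \<le> n"
  shows "(\<Sum>b\<in>L. \<Sum>a\<in>L - {b}. \<Sum>t\<in>ranked_trees_on (L - {b}). g (graft a b n t))
    = 2 * (\<Sum>T\<in>ranked_trees_on L. g T)"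
proof -
  define h where "h = (\<lambda>(b, a, t). graft a b n t)"
  have "finite L" and card_L_b: "\<And>b. b \<in> L \<Longrightarrow> card (L - {b}) = Suc (n - 1)"
    using assms card.infinite by fastforce+
  then have fin_W: "\<And>b. b \<in> L \<Longrightarrow> finite (ranked_trees_on (L - {b}))"
    using finite_ranked_trees_on by blast
  then have fin: "finite (graft_triples L)"
    using \<open>finite L\<close> by (auto simp: graft_triples_def)
  have "(\<Sum>b\<in>L. \<Sum>a\<in>L - {b}. \<Sum>t\<in>ranked_trees_on (L - {b}). g (graft a b n t))
      = (\<Sum>x\<in>graft_triples L. g (h x))"
    using \<open>finite L\<close> fin_W
    by (simp add: graft_triples_def h_def sum.cartesian_product sum.Sigma split_def)
  also have "\<dots> = (\<Sum>T\<in>h ` graft_triples L. \<Sum>x\<in>{x \<in> graft_triples L. h x = T}. g (h x))"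
    by (rule sum.image_gen[OF fin])
  also have "\<dots> = (\<Sum>T\<in>ranked_trees_on L. of_nat (card {x \<in> graft_triples L. h x = T}) * g T)"
    unfolding h_def ranked_trees_on_eq_image_graft[OF assms, symmetric] by (intro sum.cong) auto
  also have "\<dots> = (\<Sum>T\<in>ranked_trees_on L. 2 * g T)"
    using graft_triples_fiber_card[OF _ assms] by (simp add: h_def)
  finally show ?thesis
    by (simp add: sum_distrib_left)
qed

lemma card_ranked_trees_on_rec:
  assumes "card L = Suc n" "1 \<le> n"
  shows "(\<Sum>b\<in>L. n * card (ranked_trees_on (L - {b}))) = 2 * card (ranked_trees_on L)"
proof -
  have "(\<Sum>b\<in>L. n * card (ranked_trees_on (L - {b})))
      = (\<Sum>b\<in>L. \<Sum>a\<in>L - {b}. \<Sum>t\<in>ranked_trees_on (L - {b}). 1::nat)"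
    using assms(1) by (intro sum.cong) auto
  then show ?thesis
    using sum_graft_ranked_trees_on[OF assms, of "\<lambda>_. 1::nat"] by simp
qed

lemma sum_B_graft_ranked_trees_on:
  assumes "card L = Suc n" "b \<in> L" "j \<noteq> n"
  shows "(\<Sum>a\<in>L - {b}. \<Sum>t\<in>ranked_trees_on (L - {b}). B j (graft a b n t))
    = (n - 1) * (\<Sum>t\<in>ranked_trees_on (L - {b}). B j t)"
proof -
  have card: "card (L - {b}) = n" and fin: "finite (L - {b})"
    using assms(1,2) card.infinite by fastforce+
  have "(\<Sum>a\<in>L - {b}. \<Sum>t\<in>ranked_trees_on (L - {b}). B j (graft a b n t))
      = (\<Sum>t\<in>ranked_trees_on (L - {b}). \<Sum>a\<in>L - {b}. B j (graft a b n t))"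
    by (rule sum.swap)
  also have "\<dots> = (\<Sum>t\<in>ranked_trees_on (L - {b}). (n - 1) * B j t)"
  proof (intro sum.cong refl)
    fix t assume "t \<in> ranked_trees_on (L - {b})"
    then have "set_mset (leaves t) \<subseteq> L - {b}"
      using fin by (simp add: ranked_trees_on_def)
    then show "(\<Sum>a\<in>L - {b}. B j (graft a b n t)) = (n - 1) * B j t"
      using sum_B_graft[OF fin _ assms(3), of t b] card by (simp add: diff_mult_distrib)
  qed
  finally show ?thesis
    by (simp add: sum_distrib_left)
qed

lemma sum_B_ranked_trees_on:
  assumes "card L = Suc m" "1 \<le> j" "j \<le> m"
  shows "m * (\<Sum>T\<in>ranked_trees_on L. B j T) = 2 * j * card (ranked_trees_on L)"
  using assms
proof (induction m arbitrary: L)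
  case (Suc m)
  let ?W = ranked_trees_on
  show ?case
  proof (cases "j = Suc m")
    case True
    then show ?thesis
      using B_top_ranked_trees_on[OF _ Suc.prems(1)] by simp
  next
    case False
    have "2 * (\<Sum>T\<in>?W L. B j T)
        = (\<Sum>b\<in>L. \<Sum>a\<in>L - {b}. \<Sum>t\<in>?W (L - {b}). B j (graft a b (Suc m) t))"
      using sum_graft_ranked_trees_on[OF Suc.prems(1), of "B j"] by simp
    also have "\<dots> = (\<Sum>b\<in>L. m * (\<Sum>t\<in>?W (L - {b}). B j t))"
      using sum_B_graft_ranked_trees_on[OF Suc.prems(1) _ False] by simp
    also have "\<dots> = (\<Sum>b\<in>L. 2 * j * card (?W (L - {b})))"
      using Suc.IH Suc.prems False by (intro sum.cong) auto
    finally have "Suc m * (2 * (\<Sum>T\<in>?W L. B j T))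
        = 2 * j * (\<Sum>b\<in>L. Suc m * card (?W (L - {b})))"
      by (simp add: sum_distrib_left ac_simps)
    then show ?thesis
      using card_ranked_trees_on_rec[OF Suc.prems(1)] by simp
  qed
qed simp

theorem corollary3:
  fixes n j :: nat
  assumes "n \<ge> 2" and "1 \<le> j" and "j \<le> n - 1"
  shows "measure_pmf.expectation (pmf_of_set (ranked_trees n)) (\<lambda>w. real (B j w) / real n)
           = real j / real (n choose 2)"
proof -
  let ?W = "ranked_trees n"
  define S where "S = (\<Sum>w\<in>?W. B j w)"
  define N where "N = card ?W"
  have card: "card {1..n} = Suc (n - 1)"
    using assms(1) by simp
  have W: "?W = ranked_trees_on {1..n}"
    by (rule ranked_trees_eq_ranked_trees_on)
  have fin: "finite ?W" and nonempty: "?W \<noteq> {}"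
    unfolding W using finite_ranked_trees_on[OF card] ranked_trees_on_nonempty[OF card] .
  have "even (n * (n - 1))"
    by (cases "even n") auto
  then have "2 * (S * (n choose 2)) = S * (n * (n - 1))"
    by (simp add: choose_two)
  also have "\<dots> = n * ((n - 1) * S)"
    by (simp add: algebra_simps)
  also have "\<dots> = 2 * (j * (n * N))"
    using sum_B_ranked_trees_on[OF card assms(2,3)] by (simp add: S_def N_def W)
  finally have "real S * real (n choose 2) = real j * (real n * real N)"
    by (simp flip: of_nat_mult)
  moreover have "N > 0" "n > 0" "(n choose 2) > 0"
    using fin nonempty assms(1) by (auto simp: N_def card_gt_0_iff)
  ultimately show ?thesis
    by (simp add: integral_pmf_of_set[OF nonempty fin] frac_eq_eq S_def N_def
        flip: sum_divide_distrib)
qed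

end
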